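(* Let $G=(X,E)$ be a graph with $|X|\ge4$. Then $G$ is a polar-cat if and only if there exist a vertex $v\in X$ and two ordered sets $Y=\{y_1,\dots,y_{k-1},y_k=v\}$ and $Z=\{z_1,\dots,z_{m-1},z_m=v\}$ with $k,m\ge2$, $Y\cap Z=\{v\}$ and $Y\cup Z=X$, such that one of the following holds: (a) $G[Y]$ and $G[Z]$ are connected and the edge set of $G$ consists exactly of the pairs $\{y_i,y_j\}$ with $1\le i<j\le k$, $i$ odd, and the pairs $\{z_i,z_j\}$ with $1\le i<j\le m$, $i$ odd; (b) $G[Y]$ and $G[Z]$ are disconnected and the edge set of $G$ consists exactly of the pairs $\{y_i,y_j\}$ with $1\le i<j\le k$, $i$ even, the pairs $\{z_i,z_j\}$ with $1\le i<j\le m$, $i$ even, and all pairs $\{y,z\}$ with $y\in Y\setminus\{v\}$, $z\in Z\setminus\{v\}$. In this case $G$ is a $(v,G[Y],G[Z])$-polar-cat.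
   Context: Graphs finite, simple, undirected; $G[W]$ induced subgraph; $G-v$ deletion; join of vertex-disjoint graphs adds all edges between them to the disjoint union; a cograph is a graph without induced $P_4$. A caterpillar is a rooted tree whose inner vertices each have two children and induce a path with the root at one end; a cherry is a pair of leaves with a common parent. A cograph is caterpillar-explainable if its unique discriminating cotree (the labeled rooted tree explaining it in which adjacent inner vertices get different labels from $\{0,1\}$; $x,y$ adjacent iff their lowest common ancestor has label 1) is a caterpillar. $G$ is a $(v,G_1,G_2)$-pseudo-cograph if $G_1,G_2$ are induced subgraphs, $v\in V(G)$, with $V(G)=V(G_1)\cup V(G_2)$, $V(G_1)\cap V(G_2)=\{v\}$, $|V(G_1)|,|V(G_2)|>1$, $G_1,G_2$ cographs, and $G-v$ the join or disjoint union of $G_1-v,G_2-v$. Such $G$ with $|V(G)|\ge4$ is a $(v,G_1,G_2)$-polar-cat if either ($G_1,G_2$ both connected and $G-v$ the disjoint union of $G_1-v,G_2-v$) or ($G_1,G_2$ both disconnected and $G-v$ the join), and $G_1,G_2$ are caterpillar-explainable with $v$ part of a cherry in both explaining caterpillars. A polar-cat is a $(v,G_1,G_2)$-polar-cat for some $v,G_1,G_2$. *)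

theory Defs
  imports Main
begin

type_synonym 'a graph = "'a set \<times> 'a set set"

definition is_graph :: "'a graph \<Rightarrow> bool" where
  "is_graph G \<longleftrightarrow> finite (fst G) \<and>
     (\<forall>e\<in>snd G. \<exists>x y. e = {x, y} \<and> x \<noteq> y \<and> x \<in> fst G \<and> y \<in> fst G)"

definition induced :: "'a graph \<Rightarrow> 'a set \<Rightarrow> 'a graph" where
  "induced G W = (W, {e \<in> snd G. e \<subseteq> W})"

definition del_vertex :: "'a graph \<Rightarrow> 'a \<Rightarrow> 'a graph" where
  "del_vertex G v = induced G (fst G - {v})"

definition disj_union :: "'a graph \<Rightarrow> 'a graph \<Rightarrow> 'a graph" where
  "disj_union G H = (fst G \<union> fst H, snd G \<union> snd H)"

definition graph_join :: "'a graph \<Rightarrow> 'a graph \<Rightarrow> 'a graph" where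
  "graph_join G H = (fst G \<union> fst H,
     snd G \<union> snd H \<union> {{x, y} | x y. x \<in> fst G \<and> y \<in> fst H})"

definition adj_rel :: "'a graph \<Rightarrow> ('a \<times> 'a) set" where
  "adj_rel G = {(x, y). x \<in> fst G \<and> y \<in> fst G \<and> {x, y} \<in> snd G}"

definition connected_graph :: "'a graph \<Rightarrow> bool" where
  "connected_graph G \<longleftrightarrow> fst G \<noteq> {} \<and>
     (\<forall>x\<in>fst G. \<forall>y\<in>fst G. (x, y) \<in> (adj_rel G)\<^sup>*)"

text \<open>Cograph: no induced P4 (a-b-c-d).\<close>
definition cograph :: "'a graph \<Rightarrow> bool" where
  "cograph G \<longleftrightarrow> \<not> (\<exists>a\<in>fst G. \<exists>b\<in>fst G. \<exists>c\<in>fst G. \<exists>d\<in>fst G.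
      distinct [a, b, c, d] \<and> {a, b} \<in> snd G \<and> {b, c} \<in> snd G \<and> {c, d} \<in> snd G \<and>
      {a, c} \<notin> snd G \<and> {b, d} \<notin> snd G \<and> {a, d} \<notin> snd G)"

text \<open>Rooted labelled trees: leaves carry vertices, inner vertices carry a label
(True = 1, False = 0) and an (ordered) list of children.\<close>

datatype 'a cotree = Leaf 'a | Inner bool "'a cotree list"

primrec leaves :: "'a cotree \<Rightarrow> 'a list" where
  "leaves (Leaf a) = [a]"
| "leaves (Inner b ts) = concat (map leaves ts)"

primrec subtrees :: "'a cotree \<Rightarrow> 'a cotree set" where
  "subtrees (Leaf a) = {Leaf a}"
| "subtrees (Inner b ts) = insert (Inner b ts) (\<Union> (set (map subtrees ts)))"

text \<open>x and y are adjacent according to T iff their lowest common ancestor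
(the inner vertex whose leaf set contains both, while no child's does)
has label 1.\<close>
definition cotree_adj :: "'a cotree \<Rightarrow> 'a \<Rightarrow> 'a \<Rightarrow> bool" where
  "cotree_adj T x y \<longleftrightarrow> (\<exists>ts. Inner True ts \<in> subtrees T \<and>
      x \<in> set (leaves (Inner True ts)) \<and> y \<in> set (leaves (Inner True ts)) \<and>
      \<not> (\<exists>t\<in>set ts. x \<in> set (leaves t) \<and> y \<in> set (leaves t)))"

definition explains :: "'a cotree \<Rightarrow> 'a graph \<Rightarrow> bool" where
  "explains T G \<longleftrightarrow> distinct (leaves T) \<and> set (leaves T) = fst G \<and>
     (\<forall>b ts. Inner b ts \<in> subtrees T \<longrightarrow> length ts \<ge> 2) \<and>
     (\<forall>x\<in>fst G. \<forall>y\<in>fst G. x \<noteq> y \<longrightarrow> ({x, y} \<in> snd G \<longleftrightarrow> cotree_adj T x y))"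

definition discriminating :: "'a cotree \<Rightarrow> bool" where
  "discriminating T \<longleftrightarrow> (\<forall>b ts. Inner b ts \<in> subtrees T \<longrightarrow>
      (\<forall>b' ts'. Inner b' ts' \<in> set ts \<longrightarrow> b' \<noteq> b))"

text \<open>Caterpillar: every inner vertex has exactly two children and at most one
inner child (so the inner vertices induce a path with the root at one end).\<close>
definition caterpillar :: "'a cotree \<Rightarrow> bool" where
  "caterpillar T \<longleftrightarrow> (\<forall>b ts. Inner b ts \<in> subtrees T \<longrightarrow>
      length ts = 2 \<and> card {i. i < length ts \<and> (\<exists>b' ts'. ts ! i = Inner b' ts')} \<le> 1)"

definition in_cherry :: "'a cotree \<Rightarrow> 'a \<Rightarrow> bool" where
  "in_cherry T v \<longleftrightarrow> (\<exists>b ts w. Inner b ts \<in> subtrees T \<and> length ts = 2 \<and>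
      Leaf v \<in> set ts \<and> Leaf w \<in> set ts \<and> w \<noteq> v)"

text \<open>The discriminating cotree of a cograph is unique, so "the explaining caterpillar"
is any discriminating caterpillar cotree explaining G.\<close>
definition caterpillar_explainable :: "'a graph \<Rightarrow> bool" where
  "caterpillar_explainable G \<longleftrightarrow>
     (\<exists>T. explains T G \<and> discriminating T \<and> caterpillar T)"

definition cat_with_cherry :: "'a graph \<Rightarrow> 'a \<Rightarrow> bool" where
  "cat_with_cherry G v \<longleftrightarrow>
     (\<exists>T. explains T G \<and> discriminating T \<and> caterpillar T \<and> in_cherry T v)"

definition pseudo_cograph :: "'a graph \<Rightarrow> 'a \<Rightarrow> 'a set \<Rightarrow> 'a set \<Rightarrow> bool" where
  "pseudo_cograph G v X1 X2 \<longleftrightarrow>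
     X1 \<subseteq> fst G \<and> X2 \<subseteq> fst G \<and> v \<in> fst G \<and>
     fst G = X1 \<union> X2 \<and> X1 \<inter> X2 = {v} \<and> card X1 > 1 \<and> card X2 > 1 \<and>
     cograph (induced G X1) \<and> cograph (induced G X2) \<and>
     (del_vertex G v = graph_join (del_vertex (induced G X1) v) (del_vertex (induced G X2) v) \<or>
      del_vertex G v = disj_union (del_vertex (induced G X1) v) (del_vertex (induced G X2) v))"

definition polar_cat_at :: "'a graph \<Rightarrow> 'a \<Rightarrow> 'a set \<Rightarrow> 'a set \<Rightarrow> bool" where
  "polar_cat_at G v X1 X2 \<longleftrightarrow>
     pseudo_cograph G v X1 X2 \<and> card (fst G) \<ge> 4 \<and>
     ((connected_graph (induced G X1) \<and> connected_graph (induced G X2) \<and>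
       del_vertex G v = disj_union (del_vertex (induced G X1) v) (del_vertex (induced G X2) v)) \<or>
      (\<not> connected_graph (induced G X1) \<and> \<not> connected_graph (induced G X2) \<and>
       del_vertex G v = graph_join (del_vertex (induced G X1) v) (del_vertex (induced G X2) v))) \<and>
     caterpillar_explainable (induced G X1) \<and> caterpillar_explainable (induced G X2) \<and>
     cat_with_cherry (induced G X1) v \<and> cat_with_cherry (induced G X2) v"

definition polar_cat :: "'a graph \<Rightarrow> bool" where
  "polar_cat G \<longleftrightarrow> (\<exists>v X1 X2. polar_cat_at G v X1 X2)"

text \<open>Lists ys = [y_1, ..., y_k], with y_i = ys ! (i - 1), 1-based indices as in the paper.\<close>
definition odd_edges :: "'a list \<Rightarrow> 'a set set" where
  "odd_edges ys = {{ys ! (i - 1), ys ! (j - 1)} | i j. 1 \<le> i \<and> i < j \<and> j \<le> length ys \<and> odd i}"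

definition even_edges :: "'a list \<Rightarrow> 'a set set" where
  "even_edges ys = {{ys ! (i - 1), ys ! (j - 1)} | i j. 1 \<le> i \<and> i < j \<and> j \<le> length ys \<and> even i}"

definition polar_cat_condition :: "'a graph \<Rightarrow> 'a \<Rightarrow> 'a list \<Rightarrow> 'a list \<Rightarrow> bool" where
  "polar_cat_condition G v ys zs \<longleftrightarrow>
     v \<in> fst G \<and> distinct ys \<and> distinct zs \<and> length ys \<ge> 2 \<and> length zs \<ge> 2 \<and>
     last ys = v \<and> last zs = v \<and> set ys \<inter> set zs = {v} \<and> set ys \<union> set zs = fst G \<and>
     ((connected_graph (induced G (set ys)) \<and> connected_graph (induced G (set zs)) \<and>
       snd G = odd_edges ys \<union> odd_edges zs) \<or>
      (\<not> connected_graph (induced G (set ys)) \<and> \<not> connected_graph (induced G (set zs)) \<and>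
       snd G = even_edges ys \<union> even_edges zs \<union>
         {{y, z} | y z. y \<in> set ys - {v} \<and> z \<in> set zs - {v}}))"

end

theory Submission
  imports Defs
begin

text \<open>Read a discriminating caterpillar from the root down to the cherry containing v:
this lists the vertices as y_1, ..., y_k = v, and the lowest common ancestor of y_i and any later
y_j is the i-th inner vertex, whose label alternates along the path starting with the root label.
So the explained cograph is a threshold graph: y_i is adjacent to all later vertices exactly when
the i-th label is 1, i.e. for odd i if the root is labelled 1 (G connected) and for even i otherwise.
Conversely every such list yields a caterpillar explaining that graph with v in a cherry. Whether
G - v is the disjoint union or the join of its two sides only decides whether the cross edges
between Y - {v} and Z - {v} are present, which gives the two cases of the characterization.\<close>

text \<open>The vertex ys ! i is adjacent to every later vertex if p i holds and to none otherwise, so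
(set ys, threshold_edges p ys) is the threshold graph built by adding the vertices from the last
one backwards, each as a dominating or an isolated vertex. Indices are 0-based, unlike in
odd_edges and even_edges.\<close>

definition threshold_edges :: "(nat \<Rightarrow> bool) \<Rightarrow> 'a list \<Rightarrow> 'a set set" where
  "threshold_edges p ys = {{ys ! i, ys ! j} | i j. i < j \<and> j < length ys \<and> p i}"

text \<open>The label of the i-th inner vertex (counted from 0 at the root) of a discriminating
caterpillar whose root has label b.\<close>

definition alternating :: "bool \<Rightarrow> nat \<Rightarrow> bool" where
  "alternating b i \<longleftrightarrow> (even i \<longleftrightarrow> b)"

lemma alternating_Suc [simp]: "alternating b (Suc i) = alternating (\<not> b) i"
  by (auto simp: alternating_def)

lemma alternating_0 [simp]: "alternating b 0 = b"
  by (simp add: alternating_def)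

lemma one_based_edges_eq_threshold_edges:
  "{{ys ! (i - 1), ys ! (j - 1)} | i j. 1 \<le> i \<and> i < j \<and> j \<le> length ys \<and> q i}
     = threshold_edges (\<lambda>i. q (Suc i)) ys"
  unfolding threshold_edges_def
proof (intro set_eqI iffI)
  fix e assume "e \<in> {{ys ! (i - 1), ys ! (j - 1)} | i j. 1 \<le> i \<and> i < j \<and> j \<le> length ys \<and> q i}"
  then obtain i j where "e = {ys ! (i - 1), ys ! (j - 1)}" "1 \<le> i" "i < j" "j \<le> length ys" "q i"
    by blast
  then show "e \<in> {{ys ! i, ys ! j} | i j. i < j \<and> j < length ys \<and> q (Suc i)}"
    by (intro CollectI exI[of _ "i - 1"] exI[of _ "j - 1"]) auto
next
  fix e assume "e \<in> {{ys ! i, ys ! j} | i j. i < j \<and> j < length ys \<and> q (Suc i)}"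
  then obtain i j where "e = {ys ! i, ys ! j}" "i < j" "j < length ys" "q (Suc i)"
    by auto
  then show "e \<in> {{ys ! (i - 1), ys ! (j - 1)} | i j. 1 \<le> i \<and> i < j \<and> j \<le> length ys \<and> q i}"
    by (intro CollectI exI[of _ "Suc i"] exI[of _ "Suc j"]) auto
qed

lemma odd_edges_eq_threshold_edges: "odd_edges ys = threshold_edges (alternating True) ys"
  unfolding odd_edges_def one_based_edges_eq_threshold_edges by (simp add: alternating_def [abs_def])

lemma even_edges_eq_threshold_edges: "even_edges ys = threshold_edges (alternating False) ys"
  unfolding even_edges_def one_based_edges_eq_threshold_edges by (simp add: alternating_def [abs_def])

lemma threshold_edges_singleton [simp]: "threshold_edges p [a] = {}"
  by (simp add: threshold_edges_def)


lemma threshold_edges_Cons: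
  "threshold_edges p (a # ys) =
     (if p 0 then {{a, y} | y. y \<in> set ys} else {}) \<union> threshold_edges (\<lambda>i. p (Suc i)) ys"
proof (intro set_eqI iffI)
  fix e assume "e \<in> threshold_edges p (a # ys)"
  then obtain i j where e: "e = {(a # ys) ! i, (a # ys) ! j}" "i < j" "j < Suc (length ys)" "p i"
    unfolding threshold_edges_def by auto
  then obtain j' where j: "j = Suc j'" by (cases j) auto
  show "e \<in> (if p 0 then {{a, y} | y. y \<in> set ys} else {}) \<union> threshold_edges (\<lambda>i. p (Suc i)) ys"
  proof (cases i)
    case 0
    then show ?thesis using e j by auto
  next
    case (Suc i')
    then show ?thesis using e j unfolding threshold_edges_def by auto
  qed
next
  fix e assume "e \<in> (if p 0 then {{a, y} | y. y \<in> set ys} else {}) \<union> threshold_edges (\<lambda>i. p (Suc i)) ys"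
  then show "e \<in> threshold_edges p (a # ys)"
  proof
    assume "e \<in> (if p 0 then {{a, y} | y. y \<in> set ys} else {})"
    then obtain j where "p 0" "e = {a, ys ! j}" "j < length ys"
      by (auto simp: in_set_conv_nth split: if_splits)
    then show ?thesis unfolding threshold_edges_def
      by (intro CollectI exI[of _ 0] exI[of _ "Suc j"]) auto
  next
    assume "e \<in> threshold_edges (\<lambda>i. p (Suc i)) ys"
    then obtain i j where "e = {ys ! i, ys ! j}" "i < j" "j < length ys" "p (Suc i)"
      unfolding threshold_edges_def by auto
    then show ?thesis unfolding threshold_edges_def
      by (intro CollectI exI[of _ "Suc i"] exI[of _ "Suc j"]) auto
  qed
qed

lemma doubleton_mem_threshold_edges_Cons:
  assumes "x \<noteq> y"
  shows "{x, y} \<in> threshold_edges p (a # ys) \<longleftrightarrow>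
    (p 0 \<and> (x = a \<and> y \<in> set ys \<or> y = a \<and> x \<in> set ys)) \<or> {x, y} \<in> threshold_edges (\<lambda>i. p (Suc i)) ys"
  using assms unfolding threshold_edges_Cons by (auto simp: doubleton_eq_iff)

lemma threshold_edgeE:
  assumes "e \<in> threshold_edges p ys" "distinct ys"
  obtains x y where "e = {x, y}" "x \<noteq> y" "x \<in> set ys" "y \<in> set ys"
  using assms unfolding threshold_edges_def by (fastforce simp: nth_eq_iff_index_eq)

lemma nth_doubleton_mem_threshold_edges:
  assumes "distinct ys" "i < length ys" "j < length ys" "i \<noteq> j"
  shows "{ys ! i, ys ! j} \<in> threshold_edges p ys \<longleftrightarrow> p (min i j)"
proof
  assume "{ys ! i, ys ! j} \<in> threshold_edges p ys"
  then obtain i' j' where e: "{ys ! i, ys ! j} = {ys ! i', ys ! j'}" "i' < j'" "j' < length ys" "p i'"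
    unfolding threshold_edges_def by auto
  then have "i = i' \<and> j = j' \<or> i = j' \<and> j = i'"
    using assms by (auto simp: doubleton_eq_iff nth_eq_iff_index_eq)
  then show "p (min i j)" using e by auto
next
  assume "p (min i j)"
  then show "{ys ! i, ys ! j} \<in> threshold_edges p ys"
    using assms unfolding threshold_edges_def
    by (cases "i < j") (force simp: insert_commute min_def)+
qed

lemma cograph_threshold_edges:
  assumes "distinct ys"
  shows "cograph (set ys, threshold_edges p ys)"
  unfolding cograph_def fst_conv snd_conv
proof clarify
  fix a b c d
  assume mem: "a \<in> set ys" "b \<in> set ys" "c \<in> set ys" "d \<in> set ys"
    and path: "distinct [a, b, c, d]" "{a, b} \<in> threshold_edges p ys" "{b, c} \<in> threshold_edges p ys"
      "{c, d} \<in> threshold_edges p ys" "{a, c} \<notin> threshold_edges p ys"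
      "{b, d} \<notin> threshold_edges p ys" "{a, d} \<notin> threshold_edges p ys"
  obtain ia ib ic id where idx: "ia < length ys" "ib < length ys" "ic < length ys" "id < length ys"
    "a = ys ! ia" "b = ys ! ib" "c = ys ! ic" "d = ys ! id"
    using mem by (metis in_set_conv_nth)
  have "distinct [ia, ib, ic, id]" using path(1) idx by auto
  \<comment> \<open>the vertex of least index is adjacent to all or to none of the other three,
    which no vertex of an induced P4 is\<close>
  then show False
    using path(2-) idx nth_doubleton_mem_threshold_edges[OF assms]
    by (auto simp: min_def split: if_splits)
qed

lemma set_leaves_subtree: "s \<in> subtrees t \<Longrightarrow> set (leaves s) \<subseteq> set (leaves t)"
  by (induction t) auto

lemma subtrees_self: "t \<in> subtrees t"
  by (cases t) auto

lemma cotree_adj_mem_leaves: "cotree_adj t x y \<Longrightarrow> x \<in> set (leaves t) \<and> y \<in> set (leaves t)"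
  unfolding cotree_adj_def using set_leaves_subtree by blast

lemma cotree_adj_Inner:
  "cotree_adj (Inner b ts) x y \<longleftrightarrow>
     (b \<and> x \<in> set (leaves (Inner b ts)) \<and> y \<in> set (leaves (Inner b ts)) \<and>
        \<not> (\<exists>t\<in>set ts. x \<in> set (leaves t) \<and> y \<in> set (leaves t)))
     \<or> (\<exists>t\<in>set ts. cotree_adj t x y)"
    (is "?adj \<longleftrightarrow> ?root \<or> ?child")
proof
  assume ?adj
  then obtain ts' where ts': "Inner True ts' \<in> subtrees (Inner b ts)"
      "x \<in> set (leaves (Inner True ts'))" "y \<in> set (leaves (Inner True ts'))"
      "\<not> (\<exists>t\<in>set ts'. x \<in> set (leaves t) \<and> y \<in> set (leaves t))"
    unfolding cotree_adj_def by blast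
  show "?root \<or> ?child"
  proof (cases "Inner True ts' = Inner b ts")
    case True
    then show ?thesis using ts' by auto
  next
    case False
    then obtain t where "t \<in> set ts" "Inner True ts' \<in> subtrees t" using ts'(1) by auto
    then show ?thesis using ts' unfolding cotree_adj_def by blast
  qed
next
  assume "?root \<or> ?child"
  then show ?adj
  proof
    assume ?root
    then show ?adj unfolding cotree_adj_def by (intro exI[of _ ts]) auto
  next
    assume ?child
    then show ?adj unfolding cotree_adj_def by fastforce
  qed
qed

lemma cotree_adj_Leaf [simp]: "\<not> cotree_adj (Leaf a) x y"
  by (simp add: cotree_adj_def)

lemma cotree_adj_Inner_Leaf_child:
  assumes "set ts = {Leaf a, t}" "a \<notin> set (leaves t)" "x \<noteq> y"
  shows "cotree_adj (Inner b ts) x y \<longleftrightarrow>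
    (b \<and> (x = a \<and> y \<in> set (leaves t) \<or> y = a \<and> x \<in> set (leaves t))) \<or> cotree_adj t x y"
  using assms cotree_adj_mem_leaves[of t x y] unfolding cotree_adj_Inner by auto

fun caterpillar_tree :: "bool \<Rightarrow> 'a list \<Rightarrow> 'a cotree" where
  "caterpillar_tree b [] = Leaf undefined"
| "caterpillar_tree b [x] = Leaf x"
| "caterpillar_tree b (x # y # zs) = Inner b [Leaf x, caterpillar_tree (\<not> b) (y # zs)]"

lemma leaves_caterpillar_tree: "ys \<noteq> [] \<Longrightarrow> leaves (caterpillar_tree b ys) = ys"
  by (induction b ys rule: caterpillar_tree.induct) auto

lemma cotree_adj_caterpillar_tree:
  "distinct ys \<Longrightarrow> x \<noteq> y \<Longrightarrow>
     cotree_adj (caterpillar_tree b ys) x y \<longleftrightarrow> {x, y} \<in> threshold_edges (alternating b) ys"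
proof (induction b ys rule: caterpillar_tree.induct)
  case (3 b x' y' zs)
  have "x' \<notin> set (leaves (caterpillar_tree (\<not> b) (y' # zs)))"
    using "3.prems"(1) by (simp add: leaves_caterpillar_tree)
  then show ?case
    using 3 cotree_adj_Inner_Leaf_child[of "[Leaf x', caterpillar_tree (\<not> b) (y' # zs)]"]
    by (simp add: doubleton_mem_threshold_edges_Cons leaves_caterpillar_tree)
qed (auto simp: threshold_edges_def)

lemma caterpillar_tree_Inner_children:
  "Inner b' ts \<in> subtrees (caterpillar_tree b ys) \<Longrightarrow>
     \<exists>a t. ts = [Leaf a, t] \<and> (\<forall>b'' ts''. t = Inner b'' ts'' \<longrightarrow> b'' \<noteq> b')"
proof (induction b ys rule: caterpillar_tree.induct)
  case (3 b x y zs)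
  then show ?case by (cases zs) auto
qed auto

lemma caterpillar_caterpillar_tree: "caterpillar (caterpillar_tree b ys)"
  unfolding caterpillar_def
proof clarify
  fix b' ts assume "Inner b' ts \<in> subtrees (caterpillar_tree b ys)"
  then obtain a t where ts: "ts = [Leaf a, t]" using caterpillar_tree_Inner_children by blast
  then have "card {i. i < length ts \<and> (\<exists>b' ts'. ts ! i = Inner b' ts')} \<le> card {1::nat}"
    by (intro card_mono) (auto simp: less_Suc_eq)
  then show "length ts = 2 \<and> card {i. i < length ts \<and> (\<exists>b' ts'. ts ! i = Inner b' ts')} \<le> 1"
    using ts by simp
qed

lemma discriminating_caterpillar_tree: "discriminating (caterpillar_tree b ys)"
  unfolding discriminating_def
proof clarify
  fix b' ts ts'' assume "Inner b' ts \<in> subtrees (caterpillar_tree b ys)" "Inner b' ts'' \<in> set ts"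
  then show False using caterpillar_tree_Inner_children by fastforce
qed

lemma in_cherry_Inner:
  assumes "in_cherry t v" "t \<in> set ts"
  shows "in_cherry (Inner b ts) v"
proof -
  obtain b' ts' w where "Inner b' ts' \<in> subtrees t" "length ts' = 2"
    "Leaf v \<in> set ts'" "Leaf w \<in> set ts'" "w \<noteq> v"
    using assms(1) unfolding in_cherry_def by blast
  moreover have "subtrees t \<subseteq> subtrees (Inner b ts)" using assms(2) by auto
  ultimately show ?thesis unfolding in_cherry_def by blast
qed

lemma in_cherry_caterpillar_tree:
  "distinct ys \<Longrightarrow> 2 \<le> length ys \<Longrightarrow> in_cherry (caterpillar_tree b ys) (last ys)"
proof (induction b ys rule: caterpillar_tree.induct)
  case (3 b x y zs)
  show ?case
  proof (cases zs)
    case Nil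
    then show ?thesis using "3.prems" unfolding in_cherry_def
      by (intro exI[of _ b] exI[of _ "[Leaf x, Leaf y]"] exI[of _ x]) auto
  next
    case (Cons z zs')
    then have "in_cherry (caterpillar_tree (\<not> b) (y # zs)) (last (y # zs))" using 3 by simp
    then show ?thesis by (simp add: in_cherry_Inner)
  qed
qed auto

lemma explains_caterpillar_tree:
  assumes "distinct ys" "2 \<le> length ys"
  shows "explains (caterpillar_tree b ys) (set ys, threshold_edges (alternating b) ys)"
  unfolding explains_def fst_conv snd_conv
proof (intro conjI allI impI ballI)
  have "ys \<noteq> []" using assms(2) by auto
  then show "distinct (leaves (caterpillar_tree b ys))" "set (leaves (caterpillar_tree b ys)) = set ys"
    using assms(1) by (simp_all add: leaves_caterpillar_tree)
next
  fix b' ts assume "Inner b' ts \<in> subtrees (caterpillar_tree b ys)"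
  then obtain a t where "ts = [Leaf a, t]" using caterpillar_tree_Inner_children by blast
  then show "2 \<le> length ts" by simp
next
  fix x y :: 'a assume "x \<noteq> y"
  then show "{x, y} \<in> threshold_edges (alternating b) ys \<longleftrightarrow> cotree_adj (caterpillar_tree b ys) x y"
    using assms(1) by (simp add: cotree_adj_caterpillar_tree)
qed

lemma cat_with_cherry_threshold_edges:
  assumes "distinct ys" "2 \<le> length ys"
  shows "cat_with_cherry (set ys, threshold_edges (alternating b) ys) (last ys)"
  unfolding cat_with_cherry_def
  using assms explains_caterpillar_tree discriminating_caterpillar_tree
    caterpillar_caterpillar_tree in_cherry_caterpillar_tree by blast

lemma caterpillar_explainable_if_cat_with_cherry:
  "cat_with_cherry G v \<Longrightarrow> caterpillar_explainable G"
  unfolding cat_with_cherry_def caterpillar_explainable_def by blast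

lemma caterpillar_child: "caterpillar (Inner b ts) \<Longrightarrow> t \<in> set ts \<Longrightarrow> caterpillar t"
  unfolding caterpillar_def by auto

lemma discriminating_child: "discriminating (Inner b ts) \<Longrightarrow> t \<in> set ts \<Longrightarrow> discriminating t"
  unfolding discriminating_def by auto

lemma caterpillar_Inner_children:
  assumes "caterpillar (Inner b ts)"
  obtains a t where "ts = [Leaf a, t] \<or> ts = [t, Leaf a]"
proof -
  have "length ts = 2" and inner: "card {i. i < length ts \<and> (\<exists>b' ts'. ts ! i = Inner b' ts')} \<le> 1"
    using assms subtrees_self unfolding caterpillar_def by blast+
  then obtain t1 t2 where ts: "ts = [t1, t2]"
    by (auto simp: numeral_2_eq_2 length_Suc_conv)
  have "\<not> ((\<exists>b1 ts1. t1 = Inner b1 ts1) \<and> (\<exists>b2 ts2. t2 = Inner b2 ts2))"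
  proof
    assume "(\<exists>b1 ts1. t1 = Inner b1 ts1) \<and> (\<exists>b2 ts2. t2 = Inner b2 ts2)"
    then have "{0, 1} \<subseteq> {i. i < length ts \<and> (\<exists>b' ts'. ts ! i = Inner b' ts')}"
      using ts by auto
    then have "card {0, 1::nat} \<le> card {i. i < length ts \<and> (\<exists>b' ts'. ts ! i = Inner b' ts')}"
      by (intro card_mono) (auto simp: finite_Collect_conjI)
    then show False using inner by simp
  qed
  then show ?thesis using that ts by (cases t1; cases t2) auto
qed

lemma discriminating_caterpillar_threshold_edges:
  assumes "caterpillar T" "discriminating T" "distinct (leaves T)" "in_cherry T v" "T = Inner b ts"
  shows "\<exists>ys. distinct ys \<and> set ys = set (leaves T) \<and> 2 \<le> length ys \<and> last ys = v \<and>
     (\<forall>x y. x \<noteq> y \<longrightarrow> (cotree_adj T x y \<longleftrightarrow> {x, y} \<in> threshold_edges (alternating b) ys))"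
  using assms
proof (induction T arbitrary: b ts)
  case (Leaf x)
  then show ?case by simp
next
  case (Inner b0 ts0)
  then have T: "Inner b0 ts0 = Inner b ts" by simp
  obtain a t where ts: "ts = [Leaf a, t] \<or> ts = [t, Leaf a]"
    using Inner.prems(1) T caterpillar_Inner_children by metis
  have t: "t \<in> set ts0" and set_ts: "set ts = {Leaf a, t}" using ts T by auto
  have a: "a \<notin> set (leaves t)" and dist_t: "distinct (leaves t)"
    and leaves_T: "set (leaves (Inner b ts)) = insert a (set (leaves t))"
    using Inner.prems(3) T ts by auto
  obtain b1 ts1 w where cherry: "Inner b1 ts1 \<in> subtrees (Inner b ts)" "length ts1 = 2"
    "Leaf v \<in> set ts1" "Leaf w \<in> set ts1" "w \<noteq> v"
    using Inner.prems(4) T unfolding in_cherry_def by auto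
  have adj: "x \<noteq> y \<Longrightarrow> cotree_adj (Inner b ts) x y \<longleftrightarrow>
      (b \<and> (x = a \<and> y \<in> set (leaves t) \<or> y = a \<and> x \<in> set (leaves t))) \<or> cotree_adj t x y" for x y
    using cotree_adj_Inner_Leaf_child[OF set_ts a] by simp
  show ?case
  proof (cases t)
    case (Leaf q)
    then have "Inner b1 ts1 = Inner b ts" using cherry(1) ts by auto
    then have vw: "{w, v} = {a, q}" using cherry set_ts Leaf by auto
    have adj_wv: "cotree_adj (Inner b ts) x y \<longleftrightarrow> {x, y} \<in> threshold_edges (alternating b) [w, v]"
      if "x \<noteq> y" for x y
    proof -
      have "cotree_adj (Inner b ts) x y \<longleftrightarrow> b \<and> {x, y} = {a, q}"
        using adj[OF that] Leaf by (simp add: doubleton_eq_iff) blast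
      moreover have "{x, y} \<in> threshold_edges (alternating b) [w, v] \<longleftrightarrow> b \<and> {x, y} = {w, v}"
        using that by (simp add: doubleton_mem_threshold_edges_Cons doubleton_eq_iff) blast
      ultimately show ?thesis using vw by simp
    qed
    moreover have "set [w, v] = set (leaves (Inner b ts))" using leaves_T Leaf vw by simp
    moreover have "distinct [w, v]" "2 \<le> length [w, v]" "last [w, v] = v" using cherry(5) by simp_all
    ultimately show ?thesis unfolding T by (intro exI[of _ "[w, v]"]) blast
  next
    case (Inner b2 ts2)
    have "b2 \<noteq> b"
      using Inner.prems(2) T t Inner subtrees_self[of "Inner b ts"]
      unfolding discriminating_def by blast
    then have b2: "b2 = (\<not> b)" by blast
    \<comment> \<open>the root has only one leaf child, so the cherry lies below t\<close>
    have "Inner b1 ts1 \<noteq> Inner b ts"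
    proof
      assume "Inner b1 ts1 = Inner b ts"
      then have "Leaf v \<in> {Leaf a, t}" "Leaf w \<in> {Leaf a, t}" using cherry(3,4) set_ts by simp_all
      then show False using Inner cherry(5) by simp
    qed
    then have "Inner b1 ts1 \<in> subtrees t" using cherry(1) set_ts by auto
    then have "in_cherry t v" unfolding in_cherry_def using cherry by blast
    with Inner.IH[OF t caterpillar_child[OF Inner.prems(1) t] discriminating_child[OF Inner.prems(2) t]
        dist_t _ Inner]
    obtain ys where ys: "distinct ys" "set ys = set (leaves t)" "2 \<le> length ys" "last ys = v"
      "\<forall>x y. x \<noteq> y \<longrightarrow> (cotree_adj t x y \<longleftrightarrow> {x, y} \<in> threshold_edges (alternating b2) ys)"
      by blast
    have "cotree_adj (Inner b ts) x y \<longleftrightarrow> {x, y} \<in> threshold_edges (alternating b) (a # ys)"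
      if "x \<noteq> y" for x y
      using adj[OF that] ys(2,5) that b2 by (simp add: doubleton_mem_threshold_edges_Cons)
    moreover have "distinct (a # ys)" "set (a # ys) = set (leaves (Inner b ts))"
      "2 \<le> length (a # ys)" "last (a # ys) = v"
      using ys(1-4) a leaves_T by auto
    ultimately show ?thesis unfolding T by (intro exI[of _ "a # ys"]) blast
  qed
qed

lemma graph_edges_eq_threshold_edges:
  assumes "is_graph G" "set ys = fst G"
    and adj: "\<forall>x\<in>fst G. \<forall>y\<in>fst G. x \<noteq> y \<longrightarrow> ({x, y} \<in> snd G \<longleftrightarrow> {x, y} \<in> threshold_edges p ys)"
    and "distinct ys"
  shows "snd G = threshold_edges p ys"
proof (intro set_eqI iffI)
  fix e assume "e \<in> snd G"
  with assms(1) obtain x y where "e = {x, y}" "x \<noteq> y" "x \<in> fst G" "y \<in> fst G"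
    unfolding is_graph_def by blast
  with adj \<open>e \<in> snd G\<close> show "e \<in> threshold_edges p ys" by blast
next
  fix e assume "e \<in> threshold_edges p ys"
  then obtain x y where "e = {x, y}" "x \<noteq> y" "x \<in> set ys" "y \<in> set ys"
    using assms(4) by (rule threshold_edgeE)
  with adj assms(2) \<open>e \<in> threshold_edges p ys\<close> show "e \<in> snd G" by blast
qed

lemma cat_with_cherry_threshold_edgesE:
  assumes "is_graph G" "cat_with_cherry G v"
  obtains ys b where "distinct ys" "set ys = fst G" "2 \<le> length ys" "last ys = v"
    "snd G = threshold_edges (alternating b) ys"
proof -
  obtain T where T: "explains T G" "discriminating T" "caterpillar T" "in_cherry T v"
    using assms(2) unfolding cat_with_cherry_def by blast
  then obtain b ts where "T = Inner b ts"
    unfolding in_cherry_def by (cases T) auto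
  moreover have "distinct (leaves T)" and leaves: "set (leaves T) = fst G"
    and adj: "\<forall>x\<in>fst G. \<forall>y\<in>fst G. x \<noteq> y \<longrightarrow> ({x, y} \<in> snd G \<longleftrightarrow> cotree_adj T x y)"
    using T(1) unfolding explains_def by blast+
  ultimately obtain ys where ys: "distinct ys" "set ys = set (leaves T)" "2 \<le> length ys" "last ys = v"
    "\<forall>x y. x \<noteq> y \<longrightarrow> (cotree_adj T x y \<longleftrightarrow> {x, y} \<in> threshold_edges (alternating b) ys)"
    using discriminating_caterpillar_threshold_edges[OF T(3,2) _ T(4)] by blast
  have "snd G = threshold_edges (alternating b) ys"
    using graph_edges_eq_threshold_edges[OF assms(1) ys(2)[unfolded leaves] _ ys(1)] adj ys(5) by blast
  with ys(1-4) leaves that show ?thesis by simp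
qed

lemma connected_threshold_edges_iff:
  assumes "distinct ys" "2 \<le> length ys"
  shows "connected_graph (set ys, threshold_edges p ys) \<longleftrightarrow> p 0"
proof
  let ?G = "(set ys, threshold_edges p ys)"
  have len: "0 < length ys" using assms(2) by linarith
  assume "connected_graph ?G"
  then have "(ys ! 0, ys ! 1) \<in> (adj_rel ?G)\<^sup>*"
    using assms(2) unfolding connected_graph_def by simp
  moreover have "ys ! 0 \<noteq> ys ! 1" using assms by (subst nth_eq_iff_index_eq) auto
  ultimately obtain w where "(ys ! 0, w) \<in> adj_rel ?G" by (blast elim: converse_rtranclE)
  then have "w \<in> set ys" and edge: "{ys ! 0, w} \<in> threshold_edges p ys"
    by (simp_all add: adj_rel_def)
  then obtain j where j: "j < length ys" "w = ys ! j" by (metis in_set_conv_nth)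
  have "j \<noteq> 0"
  proof
    assume "j = 0"
    with edge j have "{ys ! 0} \<in> threshold_edges p ys" by simp
    then show False using assms(1) by (rule threshold_edgeE) auto
  qed
  then show "p 0"
    using edge j nth_doubleton_mem_threshold_edges[OF assms(1) len j(1), of p] by simp
next
  let ?G = "(set ys, threshold_edges p ys)"
  have len: "0 < length ys" using assms(2) by linarith
  assume "p 0"
  have "ys ! 0 \<in> set ys" using len by (rule nth_mem)
  have to_first: "(x, ys ! 0) \<in> (adj_rel ?G)\<^sup>* \<and> (ys ! 0, x) \<in> (adj_rel ?G)\<^sup>*"
    if "x \<in> set ys" for x
  proof (cases "x = ys ! 0")
    case False
    obtain j where j: "j < length ys" "x = ys ! j" using \<open>x \<in> set ys\<close> by (metis in_set_conv_nth)
    with False have "j \<noteq> 0" by (cases "j = 0") simp_all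
    then have "{ys ! 0, x} \<in> threshold_edges p ys"
      using \<open>p 0\<close> j nth_doubleton_mem_threshold_edges[OF assms(1) len j(1), of p] by simp
    then have "(ys ! 0, x) \<in> adj_rel ?G" "(x, ys ! 0) \<in> adj_rel ?G"
      using \<open>ys ! 0 \<in> set ys\<close> that by (simp_all add: adj_rel_def insert_commute)
    then show ?thesis by blast
  qed simp
  show "connected_graph ?G"
    unfolding connected_graph_def fst_conv
  proof (intro conjI ballI)
    show "set ys \<noteq> {}" using \<open>ys ! 0 \<in> set ys\<close> by auto
    fix x y assume "x \<in> set ys" "y \<in> set ys"
    then show "(x, y) \<in> (adj_rel ?G)\<^sup>*" using to_first by (meson rtrancl_trans)
  qed
qed

definition cross_edges :: "'a set \<Rightarrow> 'a set \<Rightarrow> 'a set set" where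
  "cross_edges A B = {{a, b} | a b. a \<in> A \<and> b \<in> B}"

lemma is_graph_induced:
  assumes "is_graph G" "W \<subseteq> fst G"
  shows "is_graph (induced G W)"
  unfolding is_graph_def induced_def fst_conv snd_conv
proof (intro conjI ballI)
  show "finite W" using assms finite_subset unfolding is_graph_def by blast
  fix e assume e: "e \<in> {e \<in> snd G. e \<subseteq> W}"
  with assms(1) obtain x y where "e = {x, y}" "x \<noteq> y" unfolding is_graph_def by blast
  with e show "\<exists>x y. e = {x, y} \<and> x \<noteq> y \<and> x \<in> W \<and> y \<in> W" by blast
qed

lemma edge_subset_vertices:
  assumes "is_graph (X, E)" "e \<in> E"
  shows "e \<subseteq> X"
proof -
  obtain x y where "e = {x, y}" "x \<in> X" "y \<in> X"
    using assms unfolding is_graph_def fst_conv snd_conv by blast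
  then show ?thesis by simp
qed

lemma edge_at_cut_vertex:
  assumes "is_graph (X, E)" "X = Y \<union> Z" "Y \<inter> Z = {v}" "e \<in> E" "v \<in> e"
  shows "e \<subseteq> Y \<or> e \<subseteq> Z"
proof -
  have "e \<subseteq> Y \<union> Z" using edge_subset_vertices[OF assms(1,4)] assms(2) by simp
  moreover have "v \<in> Y" "v \<in> Z" using assms(3) by auto
  moreover obtain x y where "e = {x, y}"
    using assms(1,4) unfolding is_graph_def snd_conv by blast
  ultimately show ?thesis using assms(5) by blast
qed

lemma del_vertex_Pair: "del_vertex (X, E) v = (X - {v}, {e \<in> E. e \<subseteq> X - {v}})"
  by (simp add: del_vertex_def induced_def)

lemma del_vertex_induced: "del_vertex (induced (X, E) W) v = (W - {v}, {e \<in> E. e \<subseteq> W - {v}})"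
  unfolding del_vertex_def induced_def by auto

lemma del_vertex_eq_disj_union_iff:
  assumes "is_graph (X, E)" "X = Y \<union> Z" "Y \<inter> Z = {v}"
  shows "del_vertex (X, E) v = disj_union (del_vertex (induced (X, E) Y) v) (del_vertex (induced (X, E) Z) v)
    \<longleftrightarrow> E = {e \<in> E. e \<subseteq> Y} \<union> {e \<in> E. e \<subseteq> Z}"
proof -
  have "del_vertex (X, E) v = disj_union (del_vertex (induced (X, E) Y) v) (del_vertex (induced (X, E) Z) v)
      \<longleftrightarrow> {e \<in> E. e \<subseteq> X - {v}} = {e \<in> E. e \<subseteq> Y - {v}} \<union> {e \<in> E. e \<subseteq> Z - {v}}"
    using assms(2) by (auto simp: del_vertex_Pair del_vertex_induced disj_union_def)
  also have "\<dots> \<longleftrightarrow> E = {e \<in> E. e \<subseteq> Y} \<union> {e \<in> E. e \<subseteq> Z}"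
    using edge_at_cut_vertex[OF assms] edge_subset_vertices[OF assms(1)] assms(2) by blast
  finally show ?thesis .
qed

lemma del_vertex_eq_graph_join_iff:
  assumes "is_graph (X, E)" "X = Y \<union> Z" "Y \<inter> Z = {v}"
  shows "del_vertex (X, E) v = graph_join (del_vertex (induced (X, E) Y) v) (del_vertex (induced (X, E) Z) v)
    \<longleftrightarrow> E = {e \<in> E. e \<subseteq> Y} \<union> {e \<in> E. e \<subseteq> Z} \<union> cross_edges (Y - {v}) (Z - {v})"
proof -
  have cross: "e \<subseteq> X - {v}" if "e \<in> cross_edges (Y - {v}) (Z - {v})" for e
    using that assms(2) unfolding cross_edges_def by auto
  have "del_vertex (X, E) v = graph_join (del_vertex (induced (X, E) Y) v) (del_vertex (induced (X, E) Z) v)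
      \<longleftrightarrow> {e \<in> E. e \<subseteq> X - {v}} =
          {e \<in> E. e \<subseteq> Y - {v}} \<union> {e \<in> E. e \<subseteq> Z - {v}} \<union> cross_edges (Y - {v}) (Z - {v})"
    using assms(2)
    by (auto simp: del_vertex_Pair del_vertex_induced graph_join_def cross_edges_def)
  also have "\<dots> \<longleftrightarrow> E = {e \<in> E. e \<subseteq> Y} \<union> {e \<in> E. e \<subseteq> Z} \<union> cross_edges (Y - {v}) (Z - {v})"
    (is "?L = ?R \<union> ?C \<longleftrightarrow> _")
  proof
    assume L: "?L = ?R \<union> ?C"
    then have "?C \<subseteq> E" by blast
    moreover have "e \<in> ?R \<union> ?C" if "e \<in> E" "v \<notin> e" for e
      using that L edge_subset_vertices[OF assms(1)] by blast
    ultimately show "E = {e \<in> E. e \<subseteq> Y} \<union> {e \<in> E. e \<subseteq> Z} \<union> ?C"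
      using edge_at_cut_vertex[OF assms] by blast
  next
    assume R: "E = {e \<in> E. e \<subseteq> Y} \<union> {e \<in> E. e \<subseteq> Z} \<union> ?C"
    then have "?C \<subseteq> ?L" using cross by blast
    moreover have "e \<in> ?R" if "e \<in> ?L" "e \<notin> ?C" for e
      using that R by blast
    moreover have "?R \<subseteq> ?L" using assms(2) by blast
    ultimately show "?L = ?R \<union> ?C" by blast
  qed
  finally show ?thesis .
qed

lemma threshold_edge_not_subset:
  assumes "e \<in> threshold_edges q zs" "distinct zs" "set ys \<inter> set zs = {v}"
  shows "\<not> e \<subseteq> set ys"
proof
  assume "e \<subseteq> set ys"
  obtain x y where xy: "e = {x, y}" "x \<noteq> y" "x \<in> set zs" "y \<in> set zs"
    using assms(1,2) by (rule threshold_edgeE)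
  with \<open>e \<subseteq> set ys\<close> have "x \<in> set ys \<inter> set zs" "y \<in> set ys \<inter> set zs" by simp_all
  with assms(3) xy(2) show False by simp
qed

lemma edges_within_threshold_edges:
  assumes "distinct ys" "distinct zs" "set ys \<inter> set zs = {v}"
    and E: "E = threshold_edges p ys \<union> threshold_edges q zs \<union> C"
    and C: "\<forall>e\<in>C. \<not> e \<subseteq> set ys"
  shows "{e \<in> E. e \<subseteq> set ys} = threshold_edges p ys"
proof -
  have "e \<subseteq> set ys" if "e \<in> threshold_edges p ys" for e
    using that assms(1) by (rule threshold_edgeE) simp
  then show ?thesis
    using E C threshold_edge_not_subset[OF _ assms(2,3)] by blast
qed

lemma cross_edge_not_subset: "e \<in> cross_edges A B \<Longrightarrow> A \<inter> W = {} \<or> B \<inter> W = {} \<Longrightarrow> \<not> e \<subseteq> W"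
  unfolding cross_edges_def by blast

lemma induced_Pair: "induced (X, E) W = (W, {e \<in> E. e \<subseteq> W})"
  by (simp add: induced_def)

lemma induced_cat_with_cherryE:
  assumes "is_graph (X, E)" "W \<subseteq> X" "cat_with_cherry (induced (X, E) W) v"
  obtains ys b where "distinct ys" "set ys = W" "2 \<le> length ys" "last ys = v"
    "{e \<in> E. e \<subseteq> W} = threshold_edges (alternating b) ys"
proof -
  have "is_graph (induced (X, E) W)" using is_graph_induced[of "(X, E)" W] assms(1,2) by simp
  then obtain ys b where "distinct ys" "set ys = fst (induced (X, E) W)" "2 \<le> length ys"
    "last ys = v" "snd (induced (X, E) W) = threshold_edges (alternating b) ys"
    using assms(3) by (rule cat_with_cherry_threshold_edgesE)
  with that show ?thesis by (simp add: induced_Pair)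
qed

lemma polar_cat_condition_if_polar_cat_at:
  assumes G: "is_graph (X, E)" and P: "polar_cat_at (X, E) v Y Z"
  shows "\<exists>ys zs. polar_cat_condition (X, E) v ys zs"
proof -
  have XYZ: "X = Y \<union> Z" and YZ: "Y \<inter> Z = {v}"
    using P unfolding polar_cat_at_def pseudo_cograph_def fst_conv by simp_all
  then have "Y \<subseteq> X" "Z \<subseteq> X" "v \<in> X" by auto
  obtain ys b where ys: "distinct ys" "set ys = Y" "2 \<le> length ys" "last ys = v"
    and EY: "{e \<in> E. e \<subseteq> Y} = threshold_edges (alternating b) ys"
    using induced_cat_with_cherryE[OF G \<open>Y \<subseteq> X\<close>] P unfolding polar_cat_at_def by blast
  obtain zs c where zs: "distinct zs" "set zs = Z" "2 \<le> length zs" "last zs = v"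
    and EZ: "{e \<in> E. e \<subseteq> Z} = threshold_edges (alternating c) zs"
    using induced_cat_with_cherryE[OF G \<open>Z \<subseteq> X\<close>] P unfolding polar_cat_at_def by blast
  have "induced (X, E) Y = (set ys, threshold_edges (alternating b) ys)"
    "induced (X, E) Z = (set zs, threshold_edges (alternating c) zs)"
    using EY EZ ys(2) zs(2) by (simp_all add: induced_Pair)
  then have conn: "connected_graph (induced (X, E) Y) \<longleftrightarrow> b" "connected_graph (induced (X, E) Z) \<longleftrightarrow> c"
    using connected_threshold_edges_iff[OF ys(1,3)] connected_threshold_edges_iff[OF zs(1,3)] by simp_all
  have "b \<and> c \<and> E = odd_edges ys \<union> odd_edges zs \<or>
      \<not> b \<and> \<not> c \<and> E = even_edges ys \<union> even_edges zs \<union> cross_edges (Y - {v}) (Z - {v})"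
    using P conn EY EZ
    unfolding polar_cat_at_def del_vertex_eq_disj_union_iff[OF G XYZ YZ]
      del_vertex_eq_graph_join_iff[OF G XYZ YZ] odd_edges_eq_threshold_edges even_edges_eq_threshold_edges
    by auto
  then have "polar_cat_condition (X, E) v ys zs"
    unfolding polar_cat_condition_def cross_edges_def
    using ys zs conn \<open>v \<in> X\<close> XYZ YZ by auto
  then show ?thesis by blast
qed

lemma polar_cat_at_threshold_sides:
  assumes G: "is_graph (X, E)" and "card X \<ge> 4"
    and ys: "distinct ys" "2 \<le> length ys" "last ys = v"
    and zs: "distinct zs" "2 \<le> length zs" "last zs = v"
    and YZ: "set ys \<inter> set zs = {v}" and XYZ: "X = set ys \<union> set zs"
    and EY: "{e \<in> E. e \<subseteq> set ys} = threshold_edges (alternating c) ys"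
    and EZ: "{e \<in> E. e \<subseteq> set zs} = threshold_edges (alternating c) zs"
    and decomposition: "E = {e \<in> E. e \<subseteq> set ys} \<union> {e \<in> E. e \<subseteq> set zs} \<union>
      (if c then {} else cross_edges (set ys - {v}) (set zs - {v}))"
  shows "polar_cat_at (X, E) v (set ys) (set zs)"
proof -
  have IY: "induced (X, E) (set ys) = (set ys, threshold_edges (alternating c) ys)"
    and IZ: "induced (X, E) (set zs) = (set zs, threshold_edges (alternating c) zs)"
    using EY EZ by (simp_all add: induced_Pair)
  have "c \<Longrightarrow> del_vertex (X, E) v =
      disj_union (del_vertex (induced (X, E) (set ys)) v) (del_vertex (induced (X, E) (set zs)) v)"
    and "\<not> c \<Longrightarrow> del_vertex (X, E) v =
      graph_join (del_vertex (induced (X, E) (set ys)) v) (del_vertex (induced (X, E) (set zs)) v)"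
    using decomposition del_vertex_eq_disj_union_iff[OF G XYZ YZ] del_vertex_eq_graph_join_iff[OF G XYZ YZ]
    by simp_all
  moreover have "connected_graph (induced (X, E) (set ys)) \<longleftrightarrow> c"
    "connected_graph (induced (X, E) (set zs)) \<longleftrightarrow> c"
    using IY IZ connected_threshold_edges_iff[OF ys(1,2)] connected_threshold_edges_iff[OF zs(1,2)]
    by simp_all
  ultimately have shape:
    "connected_graph (induced (X, E) (set ys)) \<and> connected_graph (induced (X, E) (set zs)) \<and>
       del_vertex (X, E) v =
         disj_union (del_vertex (induced (X, E) (set ys)) v) (del_vertex (induced (X, E) (set zs)) v) \<or>
     \<not> connected_graph (induced (X, E) (set ys)) \<and> \<not> connected_graph (induced (X, E) (set zs)) \<and>
       del_vertex (X, E) v =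
         graph_join (del_vertex (induced (X, E) (set ys)) v) (del_vertex (induced (X, E) (set zs)) v)"
    by (cases c) simp_all
  have "cograph (induced (X, E) (set ys))" "cograph (induced (X, E) (set zs))"
    using IY IZ cograph_threshold_edges ys(1) zs(1) by simp_all
  moreover have "card (set ys) > 1" "card (set zs) > 1"
    using distinct_card[OF ys(1)] distinct_card[OF zs(1)] ys(2) zs(2) by simp_all
  moreover have "set ys \<subseteq> X" "set zs \<subseteq> X" "v \<in> X" using XYZ YZ by blast+
  ultimately have "pseudo_cograph (X, E) v (set ys) (set zs)"
    unfolding pseudo_cograph_def fst_conv using shape XYZ YZ by blast
  moreover have "cat_with_cherry (induced (X, E) (set ys)) v" "cat_with_cherry (induced (X, E) (set zs)) v"
    using IY IZ cat_with_cherry_threshold_edges[OF ys(1,2)] cat_with_cherry_threshold_edges[OF zs(1,2)]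
      ys(3) zs(3) by simp_all
  ultimately show ?thesis
    unfolding polar_cat_at_def fst_conv
    using shape \<open>card X \<ge> 4\<close>
    by (intro conjI caterpillar_explainable_if_cat_with_cherry) assumption+
qed

lemma polar_cat_at_if_polar_cat_condition:
  assumes G: "is_graph (X, E)" and "card X \<ge> 4" and C: "polar_cat_condition (X, E) v ys zs"
  shows "polar_cat_at (X, E) v (set ys) (set zs)"
proof -
  let ?cross = "cross_edges (set ys - {v}) (set zs - {v})"
  have ys: "distinct ys" "2 \<le> length ys" "last ys = v"
    and zs: "distinct zs" "2 \<le> length zs" "last zs = v"
    and YZ: "set ys \<inter> set zs = {v}" and XYZ: "X = set ys \<union> set zs"
    using C unfolding polar_cat_condition_def by simp_all
  have "E = odd_edges ys \<union> odd_edges zs \<or> E = even_edges ys \<union> even_edges zs \<union> ?cross"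
    using C unfolding polar_cat_condition_def snd_conv cross_edges_def by (elim conjE disjE) simp_all
  then obtain c where E: "E = threshold_edges (alternating c) ys \<union> threshold_edges (alternating c) zs \<union>
      (if c then {} else ?cross)"
  proof (elim disjE)
    assume "E = odd_edges ys \<union> odd_edges zs"
    then show thesis using that[of True] by (simp add: odd_edges_eq_threshold_edges)
  next
    assume "E = even_edges ys \<union> even_edges zs \<union> ?cross"
    then show thesis using that[of False] by (simp add: even_edges_eq_threshold_edges)
  qed
  have "(set zs - {v}) \<inter> set ys = {}" "(set ys - {v}) \<inter> set zs = {}" using YZ by auto
  then have "\<not> e \<subseteq> set ys" "\<not> e \<subseteq> set zs" if "e \<in> ?cross" for e
    using that cross_edge_not_subset by meson+
  then have out_ys: "\<forall>e\<in>(if c then {} else ?cross). \<not> e \<subseteq> set ys"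
    and out_zs: "\<forall>e\<in>(if c then {} else ?cross). \<not> e \<subseteq> set zs"
    by simp_all
  have E': "E = threshold_edges (alternating c) zs \<union> threshold_edges (alternating c) ys \<union>
      (if c then {} else ?cross)"
    using E by blast
  have EY: "{e \<in> E. e \<subseteq> set ys} = threshold_edges (alternating c) ys"
    using edges_within_threshold_edges[OF ys(1) zs(1) YZ E out_ys] .
  have EZ: "{e \<in> E. e \<subseteq> set zs} = threshold_edges (alternating c) zs"
    using edges_within_threshold_edges[OF zs(1) ys(1) _ E' out_zs] YZ by (simp add: Int_commute)
  have "E = {e \<in> E. e \<subseteq> set ys} \<union> {e \<in> E. e \<subseteq> set zs} \<union> (if c then {} else ?cross)"
    using E EY EZ by simp
  with polar_cat_at_threshold_sides[OF G \<open>card X \<ge> 4\<close> ys zs YZ XYZ EY EZ] show ?thesis .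
qed

theorem mainTheorem15:
  fixes X :: "'a set" and E :: "'a set set"
  assumes "is_graph (X, E)" and "card X \<ge> 4"
  shows "(polar_cat (X, E) \<longleftrightarrow> (\<exists>v ys zs. polar_cat_condition (X, E) v ys zs)) \<and>
         (\<forall>v ys zs. polar_cat_condition (X, E) v ys zs \<longrightarrow>
            polar_cat_at (X, E) v (set ys) (set zs))"
  using polar_cat_condition_if_polar_cat_at[OF assms(1)] polar_cat_at_if_polar_cat_condition[OF assms]
  unfolding polar_cat_def by blast

end
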